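(* Let $c\ge2$ and let $F$ be a standard $c$-coloring. Let $X\in\mathcal X_F$ and let $c_1$ be the color of the monochromatic clique $F[X]$. Then for every $y\in V(F)\setminus X$ there exists at most one edge $e_0\in y\ast X$ with $F(e_0)=c_1$, and there is a color $c_2\neq c_1$ such that $F(e)=c_2$ for all $e\in (y\ast X)\setminus\{e_0\}$ (where $\{e_0\}$ is empty if no such edge exists).
   Context: A $c$-coloring $F$ is a map from the $2$-subsets of a finite set $V(F)$ to $[c]$. $F$ is standard if it contains no induced copy of any coloring in $\hat K_{3,1}$ or $\hat K_{3,3}$, where: $\hat K_{3,1}$ is the family of $4$-vertex colorings consisting of a monochromatic triangle of color $a$ plus a vertex joined to it by either (two edges of color $a$ and one of color $b\ne a$), or (three edges of three distinct colors, one being $a$), or (two edges of color $b$ and one of color $d$, with $a,b,d$ distinct); $\hat K_{3,3}$ is the family of $6$-vertex colorings consisting of two disjoint triangles monochromatic in colors $a$ and $b$ with all nine edges between them of color $d$, $a,b,d$ distinct. $\mathcal X_F$ is the set of all inclusion-maximal vertex sets $X$ of size at least $\max(c+1,6)$ such that all pairs inside $X$ have the same color. For disjoint sets $S_1,S_2$, $S_1\ast S_2$ is the set of pairs $\{v_1,v_2\}$ with $v_i\in S_i$, and $y\ast S=\{y\}\ast S$. *)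

theory Defs
  imports Main "HOL-Library.Multiset"
begin

text \<open>A c-coloring on a finite vertex set V: F assigns to every 2-subset {u,v} of V a colour in [c] = {1..c}.
  Colourings are represented by a function on sets; only its values on 2-subsets of V matter.\<close>
definition is_coloring :: "nat \<Rightarrow> 'a set \<Rightarrow> ('a set \<Rightarrow> nat) \<Rightarrow> bool" where
  "is_coloring c V F \<longleftrightarrow> finite V \<and> (\<forall>u\<in>V. \<forall>v\<in>V. u \<noteq> v \<longrightarrow> F {u, v} \<in> {1..c})"

definition induced_copy :: "'b set \<Rightarrow> ('b set \<Rightarrow> nat) \<Rightarrow> 'a set \<Rightarrow> ('a set \<Rightarrow> nat) \<Rightarrow> bool" where
  "induced_copy W G V F \<longleftrightarrow> (\<exists>\<phi>. inj_on \<phi> W \<and> \<phi> ` W \<subseteq> V \<and>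
      (\<forall>u\<in>W. \<forall>v\<in>W. u \<noteq> v \<longrightarrow> F {\<phi> u, \<phi> v} = G {u, v}))"

text \<open>Vertex set {0,1,2,3}: triangle {0,1,2} of colour a, vertex 3 joined to 0,1,2 by colours p,q,r.\<close>
definition K31 :: "nat \<Rightarrow> nat \<Rightarrow> nat \<Rightarrow> nat \<Rightarrow> nat set \<Rightarrow> nat" where
  "K31 a p q r e = (if (3::nat) \<notin> e then a else if (0::nat) \<in> e then p else if (1::nat) \<in> e then q else r)"

definition K31_family :: "(nat set \<Rightarrow> nat) set" where
  "K31_family = {K31 a p q r | a p q r.
      (\<exists>b. b \<noteq> a \<and> {#p, q, r#} = {#a, a, b#})
    \<or> (p \<noteq> q \<and> p \<noteq> r \<and> q \<noteq> r \<and> a \<in> {p, q, r})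
    \<or> (\<exists>b d. a \<noteq> b \<and> a \<noteq> d \<and> b \<noteq> d \<and> {#p, q, r#} = {#b, b, d#})}"

definition K33 :: "nat \<Rightarrow> nat \<Rightarrow> nat \<Rightarrow> nat set \<Rightarrow> nat" where
  "K33 a b d e = (if e \<subseteq> {0,1,2} then a else if e \<subseteq> {3,4,5} then b else d)"

definition K33_family :: "(nat set \<Rightarrow> nat) set" where
  "K33_family = {K33 a b d | a b d. a \<noteq> b \<and> a \<noteq> d \<and> b \<noteq> d}"

definition standard :: "nat \<Rightarrow> 'a set \<Rightarrow> ('a set \<Rightarrow> nat) \<Rightarrow> bool" where
  "standard c V F \<longleftrightarrow> is_coloring c V F
     \<and> \<not> (\<exists>G\<in>K31_family. induced_copy {0,1,2,3} G V F)
     \<and> \<not> (\<exists>G\<in>K33_family. induced_copy {0,1,2,3,4,5} G V F)"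

definition monochromatic :: "('a set \<Rightarrow> nat) \<Rightarrow> 'a set \<Rightarrow> bool" where
  "monochromatic F X \<longleftrightarrow> (\<exists>col. \<forall>u\<in>X. \<forall>v\<in>X. u \<noteq> v \<longrightarrow> F {u, v} = col)"

definition XF :: "nat \<Rightarrow> 'a set \<Rightarrow> ('a set \<Rightarrow> nat) \<Rightarrow> 'a set set" where
  "XF c V F = {X. X \<subseteq> V \<and> card X \<ge> max (c + 1) 6 \<and> monochromatic F X
      \<and> (\<forall>Y. X \<subset> Y \<and> Y \<subseteq> V \<and> card Y \<ge> max (c + 1) 6 \<and> monochromatic F Y \<longrightarrow> False)}"

definition star :: "'a \<Rightarrow> 'a set \<Rightarrow> 'a set set" where
  "star y S = {{y, x} | x. x \<in> S}"

end

theory Submission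
  imports Defs
begin

text \<open>Two \<open>c\<^sub>1\<close>-edges from \<open>y\<close> into \<open>X\<close> together with a third edge of another
  colour span a forbidden \<open>K\<^sub>3\<^sub>,\<^sub>1\<close>; if every edge had colour \<open>c\<^sub>1\<close>, then \<open>X \<union> {y}\<close> would contradict
  the maximality of \<open>X\<close>. So there is at most one \<open>c\<^sub>1\<close>-edge. The remaining edges share one colour:
  if there is a \<open>c\<^sub>1\<close>-edge, two further edges of distinct colours give a rainbow \<open>K\<^sub>3\<^sub>,\<^sub>1\<close>; if
  there is none, pigeonhole (\<open>|X| > c\<close>) yields two edges of equal colour, and a third edge of a
  different colour gives the last type of \<open>K\<^sub>3\<^sub>,\<^sub>1\<close>.\<close>

definition K31_free :: "'a set \<Rightarrow> ('a set \<Rightarrow> nat) \<Rightarrow> bool" where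
  "K31_free V F \<longleftrightarrow> \<not> (\<exists>G\<in>K31_family. induced_copy {0,1,2,3} G V F)"

lemma standard_K31_free: "standard c V F \<Longrightarrow> K31_free V F"
  unfolding standard_def K31_free_def by blast

lemma induced_copy_K31:
  assumes "distinct [t0, t1, t2, w]" "t0 \<in> V" "t1 \<in> V" "t2 \<in> V" "w \<in> V"
    "F {t0, t1} = a" "F {t0, t2} = a" "F {t1, t2} = a"
    "F {w, t0} = p" "F {w, t1} = q" "F {w, t2} = r"
  shows "induced_copy {0,1,2,3} (K31 a p q r) V F"
  unfolding induced_copy_def
  apply (rule exI[of _ "\<lambda>i::nat. if i = 0 then t0 else if i = 1 then t1 else if i = 2 then t2 else w"])
  using assms by (auto simp: K31_def insert_commute inj_on_def)

lemma K31_family_aaab: "b \<noteq> a \<Longrightarrow> K31 a a a b \<in> K31_family"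
  unfolding K31_family_def by blast

lemma K31_family_aaqr: "a \<noteq> q \<Longrightarrow> a \<noteq> r \<Longrightarrow> q \<noteq> r \<Longrightarrow> K31 a a q r \<in> K31_family"
  unfolding K31_family_def by blast

lemma K31_family_abbd: "a \<noteq> b \<Longrightarrow> a \<noteq> d \<Longrightarrow> b \<noteq> d \<Longrightarrow> K31 a b b d \<in> K31_family"
  unfolding K31_family_def by blast

lemma XF_not_extended_by_clique_colour:
  assumes X: "X \<in> XF c V F" and y: "y \<in> V - X"
    and mono: "\<forall>u\<in>X. \<forall>v\<in>X. u \<noteq> v \<longrightarrow> F {u, v} = c1"
  shows "\<exists>x\<in>X. F {y, x} \<noteq> c1"
proof (rule ccontr)
  assume "\<not> ?thesis"
  then have "\<forall>u\<in>insert y X. \<forall>v\<in>insert y X. u \<noteq> v \<longrightarrow> F {u, v} = c1"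
    using mono by (auto simp: insert_commute)
  then have "monochromatic F (insert y X)"
    unfolding monochromatic_def by blast
  moreover have "X \<subseteq> V" and "card X \<ge> max (c + 1) 6"
    and maximal: "\<And>Y. X \<subset> Y \<Longrightarrow> Y \<subseteq> V \<Longrightarrow> card Y \<ge> max (c + 1) 6 \<Longrightarrow> monochromatic F Y \<Longrightarrow> False"
    using X unfolding XF_def by blast+
  moreover have "card X \<le> card (insert y X)"
    by (rule card_insert_le)
  ultimately show False
    using maximal[of "insert y X"] y by auto
qed

context
  fixes V :: "'a set" and F :: "'a set \<Rightarrow> nat" and X :: "'a set" and c1 :: nat and y :: 'a
  assumes K31_free: "K31_free V F"
    and XV: "X \<subseteq> V" and y: "y \<in> V - X"
    and mono: "\<forall>u\<in>X. \<forall>v\<in>X. u \<noteq> v \<longrightarrow> F {u, v} = c1"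
begin

lemma no_K31_over_clique:
  assumes "K31 c1 (F {y, t0}) (F {y, t1}) (F {y, t2}) \<in> K31_family"
    and "t0 \<in> X" "t1 \<in> X" "t2 \<in> X" "distinct [t0, t1, t2]"
  shows False
proof -
  have "induced_copy {0,1,2,3} (K31 c1 (F {y, t0}) (F {y, t1}) (F {y, t2})) V F"
  proof (rule induced_copy_K31)
    show "distinct [t0, t1, t2, y]" using assms(2-5) y by auto
    show "t0 \<in> V" "t1 \<in> V" "t2 \<in> V" "y \<in> V" using assms(2-4) XV y by auto
    show "F {t0, t1} = c1" "F {t0, t2} = c1" "F {t1, t2} = c1" using assms(2-5) mono by auto
  qed simp_all
  then show False using assms(1) K31_free unfolding K31_free_def by blast
qed

lemma two_clique_colour_edges_force_all:
  assumes "x1 \<in> X" "x2 \<in> X" "x1 \<noteq> x2" "F {y, x1} = c1" "F {y, x2} = c1" "x \<in> X"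
  shows "F {y, x} = c1"
proof (rule ccontr)
  assume ne: "F {y, x} \<noteq> c1"
  then have "x \<noteq> x1" "x \<noteq> x2" using assms by auto
  then show False
    using no_K31_over_clique[of x1 x2 x] K31_family_aaab[OF ne] assms by simp
qed

lemma clique_colour_edge_forces_equal_colours:
  assumes "x0 \<in> X" "F {y, x0} = c1"
    and "x1 \<in> X" "F {y, x1} \<noteq> c1" "x2 \<in> X" "F {y, x2} \<noteq> c1"
  shows "F {y, x1} = F {y, x2}"
proof (rule ccontr)
  assume ne: "F {y, x1} \<noteq> F {y, x2}"
  then have "distinct [x0, x1, x2]" using assms by auto
  then show False
    using no_K31_over_clique[of x0 x1 x2] K31_family_aaqr[of c1 "F {y, x1}" "F {y, x2}"] assms ne
    by simp
qed

lemma no_clique_colour_edge_forces_equal_colours: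
  assumes col: "is_coloring c V F" and big: "card X > c"
    and none: "\<forall>x\<in>X. F {y, x} \<noteq> c1"
    and x12: "x1 \<in> X" "x2 \<in> X"
  shows "F {y, x1} = F {y, x2}"
proof -
  define g where "g x = F {y, x}" for x
  have "g ` X \<subseteq> {1..c}"
    using col XV y unfolding is_coloring_def g_def by fastforce
  then have "card (g ` X) < card X"
    using big card_mono[of "{1..c}" "g ` X"] by simp
  then obtain u v where uv: "u \<in> X" "v \<in> X" "u \<noteq> v" "g u = g v"
    using card_image unfolding inj_on_def by (metis less_irrefl)
  have all_gu: "g z = g u" if z: "z \<in> X" for z
  proof (rule ccontr)
    assume ne: "g z \<noteq> g u"
    then have "distinct [u, v, z]" using uv by auto
    then show False
      using no_K31_over_clique[of u v z] K31_family_abbd[of c1 "g u" "g z"] none uv z ne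
      unfolding g_def by auto
  qed
  show ?thesis using all_gu[OF x12(1)] all_gu[OF x12(2)] unfolding g_def by simp
qed

lemma clique_colour_neighbours_card_le_1:
  assumes X: "X \<in> XF c V F"
  shows "card {x \<in> X. F {y, x} = c1} \<le> 1"
proof -
  have "card X \<ge> max (c + 1) 6"
    using X unfolding XF_def by blast
  then have "finite X"
    using card.infinite by fastforce
  moreover have "\<not> (\<forall>x\<in>X. F {y, x} = c1)"
    using XF_not_extended_by_clique_colour[OF X y mono] by blast
  ultimately show ?thesis
    using two_clique_colour_edges_force_all by (auto simp: card_le_Suc0_iff_eq)
qed

lemma other_neighbours_share_colour:
  assumes col: "is_coloring c V F" and big: "card X > c"
  shows "\<exists>c2. c2 \<noteq> c1 \<and> (\<forall>x\<in>X. F {y, x} \<noteq> c1 \<longrightarrow> F {y, x} = c2)"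
proof (cases "\<exists>x\<in>X. F {y, x} \<noteq> c1")
  case True
  then obtain x where x: "x \<in> X" "F {y, x} \<noteq> c1" by blast
  have "F {y, x'} = F {y, x}" if "x' \<in> X" "F {y, x'} \<noteq> c1" for x'
  proof (cases "\<exists>x0\<in>X. F {y, x0} = c1")
    case True
    then show ?thesis using clique_colour_edge_forces_equal_colours that x by blast
  next
    case False
    then show ?thesis using no_clique_colour_edge_forces_equal_colours[OF col big] that x by blast
  qed
  then show ?thesis using x by blast
qed (auto intro: exI[of _ "Suc c1"])

end

theorem claim5p3:
  fixes c :: nat and V :: "'a set" and F :: "'a set \<Rightarrow> nat" and X :: "'a set" and c1 :: nat
  assumes "c \<ge> 2"
    and "standard c V F"
    and "X \<in> XF c V F"
    and "\<forall>u\<in>X. \<forall>v\<in>X. u \<noteq> v \<longrightarrow> F {u, v} = c1"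
  shows "\<forall>y \<in> V - X.
           card {e \<in> star y X. F e = c1} \<le> 1
         \<and> (\<exists>c2. c2 \<noteq> c1 \<and> (\<forall>e \<in> star y X - {e \<in> star y X. F e = c1}. F e = c2))"
proof
  fix y assume y: "y \<in> V - X"
  have free: "K31_free V F" and col: "is_coloring c V F"
    using assms(2) standard_K31_free unfolding standard_def by auto
  have XV: "X \<subseteq> V" and big: "card X > c"
    using assms(3) unfolding XF_def by auto
  have "finite X" using big card.infinite by fastforce
  have "{e \<in> star y X. F e = c1} = (\<lambda>x. {y, x}) ` {x \<in> X. F {y, x} = c1}"
    unfolding star_def by auto
  then have "card {e \<in> star y X. F e = c1} \<le> 1"
    using clique_colour_neighbours_card_le_1[OF free XV y assms(4) assms(3)]
      card_image_le[of "{x \<in> X. F {y, x} = c1}" "\<lambda>x. {y, x}"] \<open>finite X\<close> by simp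
  moreover obtain c2 where "c2 \<noteq> c1" "\<forall>x\<in>X. F {y, x} \<noteq> c1 \<longrightarrow> F {y, x} = c2"
    using other_neighbours_share_colour[OF free XV y assms(4) col big] by blast
  ultimately show "card {e \<in> star y X. F e = c1} \<le> 1
      \<and> (\<exists>c2. c2 \<noteq> c1 \<and> (\<forall>e \<in> star y X - {e \<in> star y X. F e = c1}. F e = c2))"
    unfolding star_def by auto
qed

end
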